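(* Let $X$ be a compact metric space and $f\colon X\to X$ a continuous map. Suppose there is $x\in X$ such that $\omega_f(x)$ is infinite, contains a periodic point of $f$, and contains a point which is isolated in $\omega_f(x)$ (with its relative topology). Then there exist $\delta>0$ and an infinite $\delta$-scrambled set for $f$.
   Context: $\omega_f(x)$ denotes the $\omega$-limit set of $x$, i.e. the set of limit points of the sequence $(f^n(x))_{n\ge0}$. For $\delta>0$, a pair $(u,v)$ of points is $\delta$-scrambled if $\liminf_{n\to\infty}d(f^n(u),f^n(v))=0$ and $\limsup_{n\to\infty}d(f^n(u),f^n(v))\ge\delta$; a set is $\delta$-scrambled if every pair of its distinct points is $\delta$-scrambled. *)

theory Defs
  imports "HOL-Analysis.Analysis" "HOL-Library.Liminf_Limsup"
begin

definition omega_limit :: "('a::metric_space \<Rightarrow> 'a) \<Rightarrow> 'a \<Rightarrow> 'a set" where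
  "omega_limit f x = {y. \<exists>r. strict_mono r \<and> ((\<lambda>k. (f ^^ (r k)) x) \<longlonglongrightarrow> y)}"

definition periodic_point :: "('a \<Rightarrow> 'a) \<Rightarrow> 'a \<Rightarrow> bool" where
  "periodic_point f p \<longleftrightarrow> (\<exists>n>0. (f ^^ n) p = p)"

definition scrambled_pair :: "('a::metric_space \<Rightarrow> 'a) \<Rightarrow> real \<Rightarrow> 'a \<Rightarrow> 'a \<Rightarrow> bool" where
  "scrambled_pair f \<delta> u v \<longleftrightarrow>
     liminf (\<lambda>n. ereal (dist ((f ^^ n) u) ((f ^^ n) v))) = 0 \<and>
     limsup (\<lambda>n. ereal (dist ((f ^^ n) u) ((f ^^ n) v))) \<ge> ereal \<delta>"

definition scrambled_set :: "('a::metric_space \<Rightarrow> 'a) \<Rightarrow> real \<Rightarrow> 'a set \<Rightarrow> bool" where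
  "scrambled_set f \<delta> S \<longleftrightarrow> (\<forall>u\<in>S. \<forall>v\<in>S. u \<noteq> v \<longrightarrow> scrambled_pair f \<delta> u v)"

end

theory Submission
  imports Defs
begin

text \<open>
  Let \<open>p \<in> \<omega>(x)\<close> have period \<open>m\<close> and let \<open>y\<close> be isolated in \<open>\<omega>(x)\<close>, with
  \<open>ball y e \<inter> \<omega>(x) = {y}\<close>. The points \<open>f\<^sup>k\<^sup>m(x)\<close> form an \<open>e\<close>-scrambled set. A pair of them has the
  form \<open>(u, f\<^sup>j u)\<close> with \<open>m\<close> dividing \<open>j > 0\<close>, and \<open>\<omega>(u) \<supseteq> \<omega>(x)\<close>. Along times where the orbit
  of \<open>u\<close> approaches \<open>p = f\<^sup>j p\<close> the two orbits approach each other; along times where it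
  approaches \<open>y\<close> their distance tends to \<open>d(y, f\<^sup>j y)\<close>, which is at least \<open>e\<close>. Indeed \<open>f\<^sup>j y \<in> \<omega>(x)\<close>,
  so otherwise \<open>y\<close> would be periodic; but an isolated periodic point of \<open>\<omega>(x)\<close> is shadowed by
  the orbit of \<open>x\<close> from some time on, which forces \<open>\<omega>(x)\<close> to be the finite orbit of \<open>y\<close>.
  Finiteness of \<open>\<omega>(x)\<close> likewise follows from any coincidence \<open>f\<^sup>a\<^sup>m(x) = f\<^sup>b\<^sup>m(x)\<close>.
\<close>

lemma funpow_mem: "f ` X \<subseteq> X \<Longrightarrow> x \<in> X \<Longrightarrow> (f ^^ n) x \<in> X"
  by (induct n) auto

lemma continuous_on_funpow:
  assumes "continuous_on X f" "f ` X \<subseteq> X"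
  shows "continuous_on X (f ^^ n)"
proof (induct n)
  case (Suc n)
  have "continuous_on X (f \<circ> (f ^^ n))"
    using Suc assms funpow_mem[OF assms(2)]
    by (intro continuous_on_compose) (auto intro: continuous_on_subset)
  then show ?case by simp
qed simp

lemma funpow_mult_fixpoint: "(f ^^ m) p = p \<Longrightarrow> (f ^^ (k * m)) p = p"
  by (induct k) (simp_all add: funpow_add)

lemma funpow_diff_apply: "c \<le> n \<Longrightarrow> (f ^^ (n - c)) ((f ^^ c) x) = (f ^^ n) x"
  by (metis funpow_add le_add_diff_inverse2 o_apply)

lemma liminf_le_subseq_limit:
  fixes X :: "nat \<Rightarrow> 'a :: {complete_linorder, linorder_topology}"
  assumes "strict_mono r" "(\<lambda>k. X (r k)) \<longlonglongrightarrow> L"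
  shows "liminf X \<le> L"
  using liminf_subseq_mono[OF assms(1), of X] lim_imp_Liminf[OF _ assms(2)]
  by (simp add: o_def)

lemma limsup_ge_subseq_limit:
  fixes X :: "nat \<Rightarrow> 'a :: {complete_linorder, linorder_topology}"
  assumes "strict_mono r" "(\<lambda>k. X (r k)) \<longlonglongrightarrow> L"
  shows "L \<le> limsup X"
  using limsup_subseq_mono[OF assms(1), of X] lim_imp_Limsup[OF _ assms(2)]
  by (simp add: o_def)

lemma omega_limit_subset_closed:
  assumes "closed F" "eventually (\<lambda>n. (f ^^ n) x \<in> F) sequentially"
  shows "omega_limit f x \<subseteq> F"
proof
  fix z assume "z \<in> omega_limit f x"
  then obtain r where r: "strict_mono r" "(\<lambda>k. (f ^^ r k) x) \<longlonglongrightarrow> z"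
    unfolding omega_limit_def by auto
  have "eventually (\<lambda>k. (f ^^ r k) x \<in> F) sequentially"
    using filterlim_iff[THEN iffD1, OF filterlim_subseq[OF r(1)]] assms(2) by blast
  then show "z \<in> F"
    using Lim_in_closed_set[OF assms(1) _ _ r(2)] by simp
qed

lemma omega_limit_subset:
  "closed X \<Longrightarrow> f ` X \<subseteq> X \<Longrightarrow> x \<in> X \<Longrightarrow> omega_limit f x \<subseteq> X"
  by (rule omega_limit_subset_closed) (simp_all add: funpow_mem)

lemma omega_limit_meets_compact:
  assumes "compact K" "infinite {n. (f ^^ n) x \<in> K}"
  shows "K \<inter> omega_limit f x \<noteq> {}"
proof -
  obtain s :: "nat \<Rightarrow> nat" where s: "strict_mono s" "\<And>n. (f ^^ s n) x \<in> K"
    using infinite_enumerate[OF assms(2)] by blast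
  then obtain l r where "l \<in> K" "strict_mono r" "((\<lambda>n. (f ^^ s n) x) \<circ> r) \<longlonglongrightarrow> l"
    using compact_imp_seq_compact[OF assms(1)] unfolding seq_compact_def by meson
  then show ?thesis
    unfolding omega_limit_def using strict_mono_o[OF s(1)] by (auto simp: o_def)
qed

lemma eventually_orbit_avoids_compact:
  assumes "compact K" "K \<inter> omega_limit f x = {}"
  shows "eventually (\<lambda>n. (f ^^ n) x \<notin> K) sequentially"
  using omega_limit_meets_compact[OF assms(1)] assms(2)
  unfolding cofinite_eq_sequentially[symmetric] eventually_cofinite by auto

lemma omega_limit_subset_funpow_start: "omega_limit f x \<subseteq> omega_limit f ((f ^^ c) x)"
proof
  fix z assume "z \<in> omega_limit f x"
  then obtain r where r: "strict_mono r" "(\<lambda>k. (f ^^ r k) x) \<longlonglongrightarrow> z"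
    unfolding omega_limit_def by auto
  define r' where "r' k = r (k + c) - c" for k
  have "r (k + c) \<ge> c" for k
    using seq_suble[OF r(1), of "k + c"] by simp
  then have "strict_mono r'" "(f ^^ r' k) ((f ^^ c) x) = (f ^^ r (k + c)) x" for k
    using r(1) unfolding r'_def strict_mono_def
    by (auto simp: diff_less_mono funpow_diff_apply)
  moreover have "(\<lambda>k. (f ^^ r (k + c)) x) \<longlonglongrightarrow> z"
    using LIMSEQ_ignore_initial_segment[OF r(2)] .
  ultimately show "z \<in> omega_limit f ((f ^^ c) x)"
    unfolding omega_limit_def by auto
qed

lemma tendsto_funpow_orbit:
  assumes "closed X" "continuous_on X f" "f ` X \<subseteq> X" "x \<in> X"
    and "(\<lambda>k. (f ^^ r k) x) \<longlonglongrightarrow> z"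
  shows "(\<lambda>k. (f ^^ j) ((f ^^ r k) x)) \<longlonglongrightarrow> (f ^^ j) z"
proof (rule continuous_on_tendsto_compose[OF continuous_on_funpow[OF assms(2,3)] assms(5)])
  show "z \<in> X"
    using Lim_in_closed_set[OF assms(1) _ _ assms(5)] funpow_mem[OF assms(3,4)] by simp
qed (simp add: funpow_mem[OF assms(3,4)])

lemma funpow_mem_omega_limit:
  assumes "closed X" "continuous_on X f" "f ` X \<subseteq> X" "x \<in> X" "z \<in> omega_limit f x"
  shows "(f ^^ j) z \<in> omega_limit f x"
proof -
  obtain r where r: "strict_mono r" "(\<lambda>k. (f ^^ r k) x) \<longlonglongrightarrow> z"
    using assms(5) unfolding omega_limit_def by auto
  have "strict_mono (\<lambda>k. j + r k)"
    using r(1) by (simp add: strict_mono_def)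
  moreover have "(\<lambda>k. (f ^^ (j + r k)) x) \<longlonglongrightarrow> (f ^^ j) z"
    using tendsto_funpow_orbit[OF assms(1-4) r(2)] by (simp add: funpow_add)
  ultimately show ?thesis
    unfolding omega_limit_def by blast
qed

lemma finite_omega_limit_if_funpow_eq:
  assumes "(f ^^ c) x = (f ^^ d) x" "c < d"
  shows "finite (omega_limit f x)"
proof -
  let ?F = "(\<lambda>i. (f ^^ i) x) ` {..<d}"
  have "(f ^^ n) x \<in> ?F" for n
  proof (induct n rule: less_induct)
    case (less n)
    show ?case
    proof (cases "n < d")
      case False
      then have "(f ^^ n) x = (f ^^ (n - d)) ((f ^^ d) x)"
        by (simp add: funpow_diff_apply)
      also have "\<dots> = (f ^^ (n - d + c)) x"
        by (simp add: assms(1)[symmetric] funpow_add)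
      finally show ?thesis
        using less[of "n - d + c"] False assms(2) by simp
    qed simp
  qed
  then have "omega_limit f x \<subseteq> ?F"
    by (intro omega_limit_subset_closed finite_imp_closed) simp_all
  then show ?thesis
    by (rule finite_subset) simp
qed

lemma omega_limit_frequently_near:
  assumes "y \<in> omega_limit f x" "\<epsilon> > 0"
  shows "\<exists>n\<ge>N. dist ((f ^^ n) x) y < \<epsilon>"
proof -
  obtain r where r: "strict_mono r" "(\<lambda>k. (f ^^ r k) x) \<longlonglongrightarrow> y"
    using assms(1) unfolding omega_limit_def by auto
  have "eventually (\<lambda>k. N \<le> r k) sequentially"
    using filterlim_subseq[OF r(1)] by (simp add: filterlim_at_top)
  moreover have "eventually (\<lambda>k. dist ((f ^^ r k) x) y < \<epsilon>) sequentially"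
    using r(2) assms(2) by (rule tendstoD)
  ultimately have "eventually (\<lambda>k. N \<le> r k \<and> dist ((f ^^ r k) x) y < \<epsilon>) sequentially"
    by (rule eventually_conj)
  then have "\<exists>M. \<forall>k\<ge>M. N \<le> r k \<and> dist ((f ^^ r k) x) y < \<epsilon>"
    by (simp only: eventually_sequentially)
  then obtain M where "\<forall>k\<ge>M. N \<le> r k \<and> dist ((f ^^ r k) x) y < \<epsilon>"
    ..
  then show ?thesis
    by (intro exI[of _ "r M"]) simp
qed

lemma eventually_orbit_near_isolated:
  assumes "compact X" "f ` X \<subseteq> X" "x \<in> X"
    and "ball y e \<inter> omega_limit f x = {y}" "\<rho> < e" "\<eta> > 0"
  shows "eventually (\<lambda>n. dist ((f ^^ n) x) y \<le> \<rho> \<longrightarrow> dist ((f ^^ n) x) y < \<eta>) sequentially"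
proof -
  let ?K = "X \<inter> cball y \<rho> - ball y \<eta>"
  have "compact ?K"
    using compact_Int_closed[OF assms(1) closed_cball] by (rule compact_diff) simp
  moreover have "z \<notin> omega_limit f x" if "z \<in> ?K" for z
  proof
    assume "z \<in> omega_limit f x"
    moreover have "z \<in> ball y e"
      using that assms(5) by (auto simp: dist_commute)
    ultimately have "z = y"
      using assms(4) by blast
    then show False
      using that assms(6) by simp
  qed
  ultimately have "eventually (\<lambda>n. (f ^^ n) x \<notin> ?K) sequentially"
    by (intro eventually_orbit_avoids_compact) auto
  then show ?thesis
  proof eventually_elim
    case (elim n)
    then show ?case
      using funpow_mem[OF assms(2,3), of n] by (auto simp: dist_commute)
  qed
qed

lemma isolated_omega_limit_point_returns:
  assumes "compact X" "continuous_on X f" "f ` X \<subseteq> X" "x \<in> X"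
    and "ball y e \<inter> omega_limit f x = {y}" "(f ^^ q) y = y" "\<epsilon> > 0"
  shows "\<exists>n0. \<forall>k. dist ((f ^^ (n0 + k * q)) x) y < \<epsilon>"
proof -
  have y: "y \<in> omega_limit f x" "y \<in> X"
    using assms(5) omega_limit_subset[OF compact_imp_closed[OF assms(1)] assms(3,4)] by auto
  define \<rho> where "\<rho> = min \<epsilon> (e / 2)"
  have "\<rho> > 0" "\<rho> < e"
    using assms(5,7) by (auto simp: \<rho>_def)
  obtain \<eta> where \<eta>: "\<eta> > 0" "\<And>z. z \<in> X \<Longrightarrow> dist z y < \<eta> \<Longrightarrow> dist ((f ^^ q) z) y < \<rho>"
    using continuous_on_funpow[OF assms(2,3), of q] y(2) \<open>\<rho> > 0\<close> assms(6)
    unfolding continuous_on_iff by metis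
  define \<eta>' where "\<eta>' = min \<eta> \<rho>"
  have "\<eta>' > 0"
    using \<eta>(1) \<open>\<rho> > 0\<close> by (simp add: \<eta>'_def)
  obtain N where N: "\<And>n. n \<ge> N \<Longrightarrow> dist ((f ^^ n) x) y \<le> \<rho> \<Longrightarrow> dist ((f ^^ n) x) y < \<eta>'"
    using eventually_orbit_near_isolated[OF assms(1,3-5) \<open>\<rho> < e\<close> \<open>\<eta>' > 0\<close>]
    unfolding eventually_sequentially by blast
  text \<open>Once the orbit is \<open>\<eta>'\<close>-close to \<open>y\<close> after time \<open>N\<close>, applying \<open>f\<^sup>q\<close> keeps it
    \<open>\<rho>\<close>-close, and isolation upgrades this back to \<open>\<eta>'\<close>-close.\<close>
  obtain n0 where n0: "n0 \<ge> N" "dist ((f ^^ n0) x) y < \<eta>'"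
    using omega_limit_frequently_near[OF y(1) \<open>\<eta>' > 0\<close>] by blast
  have "dist ((f ^^ (n0 + k * q)) x) y < \<eta>'" for k
  proof (induct k)
    case (Suc k)
    let ?z = "(f ^^ (n0 + k * q)) x"
    have "(f ^^ (n0 + Suc k * q)) x = (f ^^ q) ?z"
      by (metis add.left_commute funpow_add mult_Suc o_apply)
    moreover have "dist ((f ^^ q) ?z) y < \<rho>"
      using Suc \<eta>(2)[OF funpow_mem[OF assms(3,4)]] by (simp add: \<eta>'_def)
    ultimately show ?case
      using N[of "n0 + Suc k * q"] n0(1) by simp
  qed (simp add: n0(2))
  then show ?thesis
    by (metis \<eta>'_def \<rho>_def min.strict_boundedE)
qed

lemma eventually_orbit_near_isolated_periodic_orbit:
  assumes "compact X" "continuous_on X f" "f ` X \<subseteq> X" "x \<in> X"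
    and "ball y e \<inter> omega_limit f x = {y}" "(f ^^ q) y = y" "q > 0" "\<delta> > 0"
  shows "eventually (\<lambda>n. infdist ((f ^^ n) x) ((\<lambda>i. (f ^^ i) y) ` {..<q}) < \<delta>) sequentially"
proof -
  have "y \<in> X"
    using assms(5) omega_limit_subset[OF compact_imp_closed[OF assms(1)] assms(3,4)] by auto
  have "\<forall>i\<in>{..<q}. eventually (\<lambda>w. dist ((f ^^ i) w) ((f ^^ i) y) < \<delta>) (at y within X)"
    using continuous_on_funpow[OF assms(2,3)] \<open>y \<in> X\<close> assms(8)
    unfolding continuous_on_def tendsto_iff by blast
  then have "eventually (\<lambda>w. \<forall>i\<in>{..<q}. dist ((f ^^ i) w) ((f ^^ i) y) < \<delta>) (at y within X)"
    by (rule eventually_ball_finite[OF finite_lessThan])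
  then obtain \<epsilon> where \<epsilon>: "\<epsilon> > 0"
    "\<And>w. w \<in> X \<Longrightarrow> w \<noteq> y \<Longrightarrow> dist w y < \<epsilon> \<Longrightarrow> \<forall>i\<in>{..<q}. dist ((f ^^ i) w) ((f ^^ i) y) < \<delta>"
    unfolding eventually_at by blast
  obtain n0 where n0: "\<And>k. dist ((f ^^ (n0 + k * q)) x) y < \<epsilon>"
    using isolated_omega_limit_point_returns[OF assms(1-6) \<epsilon>(1)] by blast
  show ?thesis
    unfolding eventually_sequentially
  proof (intro exI allI impI)
    fix n assume "n0 \<le> n"
    define i where "i = (n - n0) mod q"
    define w where "w = (f ^^ (n0 + (n - n0) div q * q)) x"
    have "n = i + (n0 + (n - n0) div q * q)"
      using mod_div_mult_eq[of "n - n0" q] \<open>n0 \<le> n\<close> unfolding i_def by linarith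
    then have "(f ^^ n) x = (f ^^ i) w"
      unfolding w_def by (metis funpow_add o_apply)
    moreover have "i < q"
      using assms(7) by (simp add: i_def)
    ultimately have "infdist ((f ^^ n) x) ((\<lambda>i. (f ^^ i) y) ` {..<q}) \<le> dist ((f ^^ i) w) ((f ^^ i) y)"
      by (auto intro: infdist_le)
    also have "\<dots> < \<delta>"
      using \<epsilon>(2)[OF funpow_mem[OF assms(3,4)] _ n0] \<open>i < q\<close> assms(8)
      by (cases "w = y") (auto simp: w_def)
    finally show "infdist ((f ^^ n) x) ((\<lambda>i. (f ^^ i) y) ` {..<q}) < \<delta>" .
  qed
qed

lemma omega_limit_subset_isolated_periodic_orbit:
  assumes "compact X" "continuous_on X f" "f ` X \<subseteq> X" "x \<in> X"
    and "ball y e \<inter> omega_limit f x = {y}" "(f ^^ q) y = y" "q > 0"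
  shows "omega_limit f x \<subseteq> (\<lambda>i. (f ^^ i) y) ` {..<q}"
proof
  let ?O = "(\<lambda>i. (f ^^ i) y) ` {..<q}"
  fix z assume z: "z \<in> omega_limit f x"
  have "infdist z ?O \<le> \<delta>" if "\<delta> > 0" for \<delta>
  proof -
    have "omega_limit f x \<subseteq> {w. infdist w ?O \<le> \<delta>}"
    proof (rule omega_limit_subset_closed)
      show "closed {w. infdist w ?O \<le> \<delta>}"
        by (intro closed_Collect_le continuous_on_infdist continuous_on_id continuous_on_const)
      show "eventually (\<lambda>n. (f ^^ n) x \<in> {w. infdist w ?O \<le> \<delta>}) sequentially"
        using eventually_orbit_near_isolated_periodic_orbit[OF assms that]
        by (rule eventually_mono) simp
    qed
    then show ?thesis
      using z by blast
  qed
  then have "infdist z ?O = 0"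
    using field_le_epsilon[of "infdist z ?O" 0] infdist_nonneg[of z ?O] by simp
  then show "z \<in> ?O"
    using in_closed_iff_infdist_zero[of ?O z] assms(7) by (auto simp: finite_imp_closed)
qed

corollary finite_omega_limit_if_isolated_periodic:
  assumes "compact X" "continuous_on X f" "f ` X \<subseteq> X" "x \<in> X"
    and "ball y e \<inter> omega_limit f x = {y}" "(f ^^ q) y = y" "q > 0"
  shows "finite (omega_limit f x)"
  using omega_limit_subset_isolated_periodic_orbit[OF assms] by (rule finite_subset) simp

lemma isolated_omega_limit_point_far_from_iterates:
  assumes "compact X" "continuous_on X f" "f ` X \<subseteq> X" "x \<in> X"
    and "infinite (omega_limit f x)" "ball y e \<inter> omega_limit f x = {y}" "j > 0"
  shows "e \<le> dist y ((f ^^ j) y)"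
proof (rule ccontr)
  assume "\<not> e \<le> dist y ((f ^^ j) y)"
  then have "(f ^^ j) y \<in> ball y e"
    by simp
  moreover have "(f ^^ j) y \<in> omega_limit f x"
    using assms(6) by (intro funpow_mem_omega_limit[OF compact_imp_closed[OF assms(1)] assms(2-4)]) blast
  ultimately have "(f ^^ j) y = y"
    using assms(6) by blast
  then show False
    using finite_omega_limit_if_isolated_periodic[OF assms(1-4,6) _ assms(7)] assms(5) by blast
qed

lemma scrambled_pair_funpow:
  assumes "closed X" "continuous_on X f" "f ` X \<subseteq> X" "u \<in> X"
    and "p \<in> omega_limit f u" "(f ^^ j) p = p"
    and "y \<in> omega_limit f u" "\<delta> \<le> dist y ((f ^^ j) y)"
  shows "scrambled_pair f \<delta> u ((f ^^ j) u)"
proof -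
  let ?d = "\<lambda>n. ereal (dist ((f ^^ n) u) ((f ^^ n) ((f ^^ j) u)))"
  have d: "?d n = ereal (dist ((f ^^ n) u) ((f ^^ j) ((f ^^ n) u)))" for n
    by (simp flip: funpow_add comp_apply[of "f ^^ n"] comp_apply[of "f ^^ j"] add: add.commute)
  have dist_along: "(\<lambda>k. ?d (r k)) \<longlonglongrightarrow> ereal (dist z ((f ^^ j) z))"
    if "(\<lambda>k. (f ^^ r k) u) \<longlonglongrightarrow> z" for r z
    unfolding d using tendsto_dist[OF that tendsto_funpow_orbit[OF assms(1-4) that]] by simp
  obtain r where r: "strict_mono r" "(\<lambda>k. (f ^^ r k) u) \<longlonglongrightarrow> p"
    using assms(5) unfolding omega_limit_def by auto
  have "liminf ?d \<le> 0"
    using liminf_le_subseq_limit[OF r(1) dist_along[OF r(2)]] assms(6) by (simp add: zero_ereal_def)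
  moreover have "liminf ?d \<ge> 0"
    by (rule Liminf_bounded) simp
  ultimately have liminf: "liminf ?d = 0"
    by simp
  obtain s where s: "strict_mono s" "(\<lambda>k. (f ^^ s k) u) \<longlonglongrightarrow> y"
    using assms(7) unfolding omega_limit_def by auto
  have "ereal \<delta> \<le> ereal (dist y ((f ^^ j) y))"
    using assms(8) by simp
  also have "\<dots> \<le> limsup ?d"
    by (rule limsup_ge_subseq_limit[OF s(1) dist_along[OF s(2)]])
  finally show ?thesis
    unfolding scrambled_pair_def using liminf by simp
qed

lemma scrambled_pair_commute: "scrambled_pair f \<delta> u v \<longleftrightarrow> scrambled_pair f \<delta> v u"
  unfolding scrambled_pair_def by (simp add: dist_commute)

lemma infinite_orbit_multiples:
  assumes "infinite (omega_limit f x)" "m > 0"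
  shows "infinite (range (\<lambda>k. (f ^^ (k * m)) x))"
proof
  assume "finite (range (\<lambda>k. (f ^^ (k * m)) x))"
  then obtain a b where "a \<noteq> b" and eq: "(f ^^ (a * m)) x = (f ^^ (b * m)) x"
    using finite_imageD[of "\<lambda>k. (f ^^ (k * m)) x" UNIV] unfolding inj_def by auto
  then consider "a * m < b * m" | "b * m < a * m"
    using assms(2) by (auto simp: nat_neq_iff)
  then show False
  proof cases
    case 1
    then show False
      using finite_omega_limit_if_funpow_eq[OF eq] assms(1) by blast
  next
    case 2
    then show False
      using finite_omega_limit_if_funpow_eq[OF eq[symmetric]] assms(1) by blast
  qed
qed

lemma scrambled_set_orbit_multiples:
  assumes "compact X" "continuous_on X f" "f ` X \<subseteq> X" "x \<in> X"
    and "infinite (omega_limit f x)" "p \<in> omega_limit f x" "(f ^^ m) p = p" "m > 0"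
    and "ball y e \<inter> omega_limit f x = {y}"
  shows "scrambled_set f e (range (\<lambda>k. (f ^^ (k * m)) x))"
proof -
  have pair: "scrambled_pair f e ((f ^^ (a * m)) x) ((f ^^ (b * m)) x)" if "a < b" for a b
  proof -
    define j where "j = (b - a) * m"
    have "a * m \<le> b * m"
      using that by simp
    then have "(f ^^ (b * m)) x = (f ^^ j) ((f ^^ (a * m)) x)"
      unfolding j_def diff_mult_distrib by (rule funpow_diff_apply[symmetric])
    moreover have "scrambled_pair f e ((f ^^ (a * m)) x) ((f ^^ j) ((f ^^ (a * m)) x))"
    proof (rule scrambled_pair_funpow[OF compact_imp_closed[OF assms(1)] assms(2,3)])
      show "(f ^^ (a * m)) x \<in> X"
        by (rule funpow_mem[OF assms(3,4)])
      show "p \<in> omega_limit f ((f ^^ (a * m)) x)" "y \<in> omega_limit f ((f ^^ (a * m)) x)"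
        using assms(6,9) omega_limit_subset_funpow_start by blast+
      show "(f ^^ j) p = p"
        unfolding j_def by (rule funpow_mult_fixpoint[OF assms(7)])
      show "e \<le> dist y ((f ^^ j) y)"
        using isolated_omega_limit_point_far_from_iterates[OF assms(1-5,9)] that assms(8)
        by (simp add: j_def)
    qed
    ultimately show ?thesis
      by simp
  qed
  show ?thesis
    unfolding scrambled_set_def
  proof (intro ballI impI)
    fix u v assume "u \<in> range (\<lambda>k. (f ^^ (k * m)) x)" "v \<in> range (\<lambda>k. (f ^^ (k * m)) x)" "u \<noteq> v"
    then obtain a b where u: "u = (f ^^ (a * m)) x" and v: "v = (f ^^ (b * m)) x" and "a \<noteq> b"
      by auto
    then consider "a < b" | "b < a"
      by linarith
    then show "scrambled_pair f e u v"
    proof cases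
      case 1
      then show ?thesis
        unfolding u v by (rule pair)
    next
      case 2
      then show ?thesis
        unfolding u v by (rule scrambled_pair_commute[THEN iffD1, OF pair])
    qed
  qed
qed

theorem proposition1p5:
  fixes X :: "'a::metric_space set" and f :: "'a \<Rightarrow> 'a" and x :: 'a
  assumes "compact X"
    and "continuous_on X f"
    and "f ` X \<subseteq> X"
    and "x \<in> X"
    and "infinite (omega_limit f x)"
    and "\<exists>p\<in>omega_limit f x. periodic_point f p"
    and "\<exists>y\<in>omega_limit f x. \<exists>e>0. ball y e \<inter> omega_limit f x = {y}"
  shows "\<exists>\<delta>>0. \<exists>S. S \<subseteq> X \<and> infinite S \<and> scrambled_set f \<delta> S"
proof -
  obtain p m where p: "p \<in> omega_limit f x" "m > 0" "(f ^^ m) p = p"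
    using assms(6) unfolding periodic_point_def by auto
  obtain y e where y: "e > 0" "ball y e \<inter> omega_limit f x = {y}"
    using assms(7) by auto
  let ?S = "range (\<lambda>k. (f ^^ (k * m)) x)"
  have "?S \<subseteq> X"
    using funpow_mem[OF assms(3,4)] by auto
  moreover have "infinite ?S"
    using infinite_orbit_multiples[OF assms(5) p(2)] .
  moreover have "scrambled_set f e ?S"
    using scrambled_set_orbit_multiples[OF assms(1-5) p(1,3,2) y(2)] .
  ultimately show ?thesis
    using y(1) by blast
qed

end
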